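(* Let $\Omega$ be a domain in $\mathbb{C}^n$ satisfying property BR, and suppose that the absolute Bergman projection $P^+_{\Omega}:L^{p_0}(\Omega)\to L^{p_0}(\Omega)$ is bounded for some $1<p_0<\infty$. Then the Berezin transform $B_{\Omega}$ extends to a bounded operator $B_{\Omega}:L^p(\Omega)\to L^p(\Omega)$ for all $p_0\leq p\leq \infty$, and \[\|B_{\Omega}\|_{L^{p_0}} \leq \sup\left\{\frac{|K_{\Omega}(w,z)|}{K_{\Omega}(z,z)}:z,w\in \Omega \right\} \|P^+_{\Omega}\|_{L^{p_0}}.\]
   Context: For a domain $\Omega\subset\mathbb{C}^n$, $A^2(\Omega)$ is the Bergman space of square-integrable holomorphic functions, and $K_{\Omega}:\Omega\times\Omega\to\mathbb{C}$ is its Bergman kernel (the reproducing kernel of the orthogonal projection $P_\Omega:L^2(\Omega)\to A^2(\Omega)$). $\Omega$ satisfies property BR if $K_{\Omega}(z,z)\neq 0$ for all $z\in\Omega$ and $\sup\{|K_{\Omega}(w,z)|/K_{\Omega}(z,z): z,w\in\Omega\}<\infty$. When $K_\Omega(z,z)\neq0$ for all $z$, the normalized kernel is $k_z^{\Omega}(w)=K_{\Omega}(w,z)/\sqrt{K_{\Omega}(z,z)}$, and the Berezin transform of $\phi\in L^\infty(\Omega)$ is $B_{\Omega}\phi(z)=\langle P_\Omega(\phi k^\Omega_z),k^\Omega_z\rangle=\int_\Omega \phi(w)\,\frac{|K_{\Omega}(w,z)|^2}{K_{\Omega}(z,z)}\,dV(w)$. The absolute Bergman projection is $P^+_{\Omega}f(z)=\int_{\Omega}|K_{\Omega}(z,w)|f(w)\,dV(w)$.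 $\|\cdot\|_{L^p}$ denotes the $L^p(\Omega)$ norm (with respect to Lebesgue measure $dV$) and the corresponding operator norm. *)

theory Defs
  imports "HOL-Analysis.Analysis"
begin

text \<open>Points of C^n are modelled as complex ^ 'n (n = CARD('n)); measures are Lebesgue
  measure restricted to the domain.\<close>

definition domain_Cn :: "(complex ^ 'n) set \<Rightarrow> bool" where
  "domain_Cn \<Omega> \<longleftrightarrow> open \<Omega> \<and> connected \<Omega> \<and> \<Omega> \<noteq> {}"

definition holo_Cn :: "(complex ^ 'n) set \<Rightarrow> (complex ^ 'n \<Rightarrow> complex) \<Rightarrow> bool" where
  "holo_Cn \<Omega> f \<longleftrightarrow> (\<forall>z\<in>\<Omega>. \<exists>L. (f has_derivative L) (at z) \<and>
      (\<forall>c v. L (c *s v) = c * L v))"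

definition memLp :: "(complex ^ 'n) set \<Rightarrow> ereal \<Rightarrow> (complex ^ 'n \<Rightarrow> complex) \<Rightarrow> bool" where
  "memLp \<Omega> p f \<longleftrightarrow> f \<in> borel_measurable (lebesgue_on \<Omega>) \<and>
     (if p = \<infinity> then (\<exists>C. AE x in lebesgue_on \<Omega>. norm (f x) \<le> C)
      else integrable (lebesgue_on \<Omega>) (\<lambda>x. norm (f x) powr real_of_ereal p))"

definition Lpnorm :: "(complex ^ 'n) set \<Rightarrow> ereal \<Rightarrow> (complex ^ 'n \<Rightarrow> complex) \<Rightarrow> real" where
  "Lpnorm \<Omega> p f =
     (if p = \<infinity> then Inf {C. C \<ge> 0 \<and> (AE x in lebesgue_on \<Omega>. norm (f x) \<le> C)}
      else (\<integral>x. norm (f x) powr real_of_ereal p \<partial>lebesgue_on \<Omega>) powr (1 / real_of_ereal p))"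

definition Lp_opnorm :: "(complex ^ 'n) set \<Rightarrow> ereal \<Rightarrow>
    ((complex ^ 'n \<Rightarrow> complex) \<Rightarrow> (complex ^ 'n \<Rightarrow> complex)) \<Rightarrow> real" where
  "Lp_opnorm \<Omega> p T = Inf {C. C \<ge> 0 \<and> (\<forall>f. memLp \<Omega> p f \<longrightarrow> Lpnorm \<Omega> p (T f) \<le> C * Lpnorm \<Omega> p f)}"

definition bergman_space :: "(complex ^ 'n) set \<Rightarrow> (complex ^ 'n \<Rightarrow> complex) set" where
  "bergman_space \<Omega> = {f. holo_Cn \<Omega> f \<and> memLp \<Omega> 2 f}"

definition is_bergman_kernel :: "(complex ^ 'n) set \<Rightarrow> (complex ^ 'n \<Rightarrow> complex ^ 'n \<Rightarrow> complex) \<Rightarrow> bool" where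
  "is_bergman_kernel \<Omega> K \<longleftrightarrow>
     (\<forall>z\<in>\<Omega>. (\<lambda>w. K w z) \<in> bergman_space \<Omega>) \<and>
     (\<forall>z\<in>\<Omega>. \<forall>f\<in>bergman_space \<Omega>. f z = (\<integral>w. f w * cnj (K w z) \<partial>lebesgue_on \<Omega>))"

definition BR_const :: "(complex ^ 'n) set \<Rightarrow> (complex ^ 'n \<Rightarrow> complex ^ 'n \<Rightarrow> complex) \<Rightarrow> real" where
  "BR_const \<Omega> K = Sup {cmod (K w z) / Re (K z z) | z w. z \<in> \<Omega> \<and> w \<in> \<Omega>}"

definition property_BR :: "(complex ^ 'n) set \<Rightarrow> (complex ^ 'n \<Rightarrow> complex ^ 'n \<Rightarrow> complex) \<Rightarrow> bool" where
  "property_BR \<Omega> K \<longleftrightarrow> (\<forall>z\<in>\<Omega>. K z z \<noteq> 0) \<and>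
      bdd_above {cmod (K w z) / Re (K z z) | z w. z \<in> \<Omega> \<and> w \<in> \<Omega>}"

definition berezin :: "(complex ^ 'n) set \<Rightarrow> (complex ^ 'n \<Rightarrow> complex ^ 'n \<Rightarrow> complex) \<Rightarrow>
    (complex ^ 'n \<Rightarrow> complex) \<Rightarrow> complex ^ 'n \<Rightarrow> complex" where
  "berezin \<Omega> K \<phi> z = (\<integral>w. \<phi> w * of_real ((cmod (K w z))\<^sup>2 / Re (K z z)) \<partial>lebesgue_on \<Omega>)"

definition abs_bergman_proj :: "(complex ^ 'n) set \<Rightarrow> (complex ^ 'n \<Rightarrow> complex ^ 'n \<Rightarrow> complex) \<Rightarrow>
    (complex ^ 'n \<Rightarrow> complex) \<Rightarrow> complex ^ 'n \<Rightarrow> complex" where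
  "abs_bergman_proj \<Omega> K f z = (\<integral>w. of_real (cmod (K z w)) * f w \<partial>lebesgue_on \<Omega>)"

definition abs_proj_bounded :: "(complex ^ 'n) set \<Rightarrow> (complex ^ 'n \<Rightarrow> complex ^ 'n \<Rightarrow> complex) \<Rightarrow>
    ereal \<Rightarrow> bool" where
  "abs_proj_bounded \<Omega> K p \<longleftrightarrow> (\<exists>C. \<forall>f. memLp \<Omega> p f \<longrightarrow>
      (AE z in lebesgue_on \<Omega>. integrable (lebesgue_on \<Omega>) (\<lambda>w. of_real (cmod (K z w)) * f w)) \<and>
      memLp \<Omega> p (abs_bergman_proj \<Omega> K f) \<and>
      Lpnorm \<Omega> p (abs_bergman_proj \<Omega> K f) \<le> C * Lpnorm \<Omega> p f)"

end

theory Submission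
  imports Defs
begin

text \<open>For fixed z the Berezin weight |k_z(w)|^2 = |K(w,z)|^2 / K(z,z) is a probability density in w,
  and property BR bounds it by c |K(z,w)|, where c is the BR constant. For q = r p0 with r \<ge> 1,
  Jensen's inequality therefore gives |B\<phi>(z)|^r \<le> \<integral> |\<phi>|^r |k_z|^2 \<le> c P^+(|\<phi>|^r)(z), and the
  L^p0 bound of P^+ applied to |\<phi>|^r bounds B\<phi> in L^q; r = 1 gives the operator norm estimate.
  For p = \<infinity> nothing but the unit mass of the weight is needed. Measurability of B\<phi> comes from
  the joint measurability of K, which is separately continuous.\<close>

lemma borel_measurable_Caratheodory:
  fixes G :: "'a::euclidean_space \<Rightarrow> 'm \<Rightarrow> 'b::metric_space"
  assumes "open \<Omega>" "\<Omega> \<noteq> {}"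
    and h: "h \<in> borel_measurable M" "\<And>m. m \<in> space M \<Longrightarrow> h m \<in> \<Omega>"
    and G_meas: "\<And>x. x \<in> \<Omega> \<Longrightarrow> (\<lambda>m. G x m) \<in> borel_measurable M"
    and G_cont: "\<And>m. m \<in> space M \<Longrightarrow> continuous_on \<Omega> (\<lambda>x. G x m)"
  shows "(\<lambda>m. G (h m) m) \<in> borel_measurable M"
proof -
  obtain D :: "'a set" where "countable D" and D_dense: "\<And>X. open X \<Longrightarrow> X \<noteq> {} \<Longrightarrow> \<exists>d\<in>D. d \<in> X"
    by (rule countable_dense_setE) blast
  define E where "E = D \<inter> \<Omega>"
  have "E \<noteq> {}" using D_dense[OF assms(1,2)] unfolding E_def by blast
  have "countable E" using \<open>countable D\<close> unfolding E_def by simp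
  define e where "e = from_nat_into E"
  have e_in: "e k \<in> \<Omega>" for k
    using from_nat_into[OF \<open>E \<noteq> {}\<close>] unfolding e_def E_def by auto
  have e_close: "\<exists>k. dist z (e k) < \<epsilon>" if "z \<in> \<Omega>" "\<epsilon> > 0" for z \<epsilon>
  proof -
    have "open (ball z \<epsilon> \<inter> \<Omega>)" "ball z \<epsilon> \<inter> \<Omega> \<noteq> {}" using assms(1) that centre_in_ball by blast+
    then obtain d where "d \<in> E" "dist z d < \<epsilon>" using D_dense unfolding E_def by fastforce
    then show ?thesis
      using range_from_nat_into[OF \<open>E \<noteq> {}\<close> \<open>countable E\<close>] unfolding e_def by (metis rangeE)
  qed
  \<comment> \<open>approximate h by countably-valued measurable maps into a dense sequence of \<Omega>\<close>
  define idx where "idx n m = (LEAST k. dist (h m) (e k) < 1 / Suc n)" for n m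
  have "idx n \<in> measurable M (count_space UNIV)" for n
    unfolding idx_def using h(1) by measurable
  then have approx_meas: "(\<lambda>m. G (e (idx n m)) m) \<in> borel_measurable M" for n
    by (rule measurable_compose_countable'[where I=UNIV, rotated]) (auto intro: G_meas e_in)
  show ?thesis
  proof (rule borel_measurable_LIMSEQ_metric[OF approx_meas])
    fix m assume m: "m \<in> space M"
    have dist_lt: "dist (e (idx n m)) (h m) < 1 / Suc n" for n
      unfolding idx_def dist_commute[of _ "h m"] by (rule LeastI_ex) (use e_close h(2)[OF m] in auto)
    have "(\<lambda>n. e (idx n m)) \<longlonglongrightarrow> h m"
    proof (subst tendsto_dist_iff, rule tendsto_sandwich[of "\<lambda>_. 0" _ _ "\<lambda>n. 1 / Suc n"])
      show "(\<lambda>n. 1 / real (Suc n)) \<longlonglongrightarrow> 0"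
        using LIMSEQ_inverse_real_of_nat by (simp add: inverse_eq_divide)
    qed (use dist_lt in \<open>auto simp: less_imp_le\<close>)
    moreover have "isCont (\<lambda>x. G x m) (h m)"
      using G_cont[OF m] h(2)[OF m] assms(1) continuous_on_eq_continuous_at by blast
    ultimately show "(\<lambda>n. G (e (idx n m)) m) \<longlonglongrightarrow> G (h m) m"
      by (rule isCont_tendsto_compose[rotated])
  qed
qed

lemma sigma_finite_lebesgue_on:
  assumes "S \<in> sets lebesgue"
  shows "sigma_finite_measure (lebesgue_on S)"
proof -
  obtain A :: "'a set set" where "countable A" "A \<subseteq> sets lborel" "\<Union>A = space lborel"
    "\<forall>a\<in>A. emeasure lborel a \<noteq> \<infinity>"
    using sigma_finite_measure.sigma_finite_countable[OF sigma_finite_lborel] by blast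
  then have "sigma_finite_measure (lebesgue :: 'a measure)"
    unfolding sigma_finite_measure_def by (intro exI[of _ A]) (auto simp: emeasure_completion)
  then show ?thesis by (rule sigma_finite_measure_restrict_space[OF _ assms])
qed

lemma powr_ge_tangent:
  fixes r a x :: real
  assumes "1 \<le> r" "0 \<le> a" "0 \<le> x"
  shows "a powr r + r * a powr (r - 1) * (x - a) \<le> x powr r"
proof (cases "0 < a \<and> 0 < x")
  case True
  have "x powr r - a powr r \<ge> r * a powr (r - 1) * (x - a)"
    by (rule convex_on_imp_above_tangent[OF powr_convex[OF assms(1)]])
       (use True in \<open>auto simp: interior_open intro: has_field_derivative_at_within has_real_derivative_powr\<close>)
  then show ?thesis by simp
next
  case False
  show ?thesis
  proof (cases "a = 0")
    case False
    then have "x = 0" "0 < a" using \<open>\<not> (0 < a \<and> 0 < x)\<close> assms by auto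
    have "a powr r \<le> r * a powr r"
      using assms(1) by (simp add: mult_le_cancel_right1)
    also have "\<dots> = r * a powr (r - 1) * a"
      using \<open>0 < a\<close> by (simp add: powr_diff)
    finally show ?thesis using \<open>x = 0\<close> by (simp add: right_diff_distrib)
  qed simp
qed

text \<open>Jensen's inequality: integrate the tangent line of t powr r at the mean against k.\<close>
lemma powr_integral_le_integral_powr:
  fixes g k :: "'a \<Rightarrow> real"
  assumes r: "1 \<le> r"
    and g: "\<And>x. x \<in> space M \<Longrightarrow> 0 \<le> g x" and k: "\<And>x. x \<in> space M \<Longrightarrow> 0 \<le> k x"
    and "integrable M k" "integral\<^sup>L M k = 1"
    and "integrable M (\<lambda>x. g x * k x)" "integrable M (\<lambda>x. g x powr r * k x)"
  shows "(\<integral>x. g x * k x \<partial>M) powr r \<le> (\<integral>x. g x powr r * k x \<partial>M)"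
proof -
  define a where "a = (\<integral>x. g x * k x \<partial>M)"
  have "0 \<le> a" unfolding a_def by (rule integral_nonneg_AE) (use g k in auto)
  have tangent_eq: "(\<lambda>x. (a powr r + r * a powr (r - 1) * (g x - a)) * k x)
       = (\<lambda>x. (a powr r - r * a powr (r - 1) * a) * k x + (r * a powr (r - 1)) * (g x * k x))"
    by (auto simp: algebra_simps)
  have "a powr r = (\<integral>x. (a powr r + r * a powr (r - 1) * (g x - a)) * k x \<partial>M)"
    unfolding tangent_eq using assms(4-6) by (simp add: a_def)
  also have "\<dots> \<le> (\<integral>x. g x powr r * k x \<partial>M)"
  proof (rule integral_mono)
    show "integrable M (\<lambda>x. (a powr r + r * a powr (r - 1) * (g x - a)) * k x)"
      unfolding tangent_eq using assms(4,6) by simp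
    fix x assume "x \<in> space M"
    then show "(a powr r + r * a powr (r - 1) * (g x - a)) * k x \<le> g x powr r * k x"
      using powr_ge_tangent[OF r \<open>0 \<le> a\<close> g] k by (auto intro: mult_right_mono)
  qed fact
  finally show ?thesis unfolding a_def .
qed

lemma powr_le_powr_plus_one:
  fixes x r q :: real
  assumes "0 \<le> x" "0 \<le> r" "r \<le> q"
  shows "x powr r \<le> x powr q + 1"
proof (cases "x \<le> 1")
  case True
  then have "x powr r \<le> 1" using assms by (simp add: powr_le1)
  then show ?thesis by (simp add: add_increasing)
next
  case False
  then show ?thesis using assms by (simp add: add_increasing2 powr_mono)
qed

lemma memLp_real_iff:
  "memLp \<Omega> (ereal p) f \<longleftrightarrow>
     f \<in> borel_measurable (lebesgue_on \<Omega>) \<and> integrable (lebesgue_on \<Omega>) (\<lambda>x. norm (f x) powr p)"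
  by (simp add: memLp_def)

lemma Lpnorm_real:
  "Lpnorm \<Omega> (ereal p) f = (\<integral>x. norm (f x) powr p \<partial>lebesgue_on \<Omega>) powr (1 / p)"
  by (simp add: Lpnorm_def)

lemma Lpnorm_real_nonneg: "0 \<le> Lpnorm \<Omega> (ereal p) f"
  by (simp add: Lpnorm_real)

lemma abs_proj_bounded_nonneg_const:
  assumes "abs_proj_bounded \<Omega> K (ereal p)"
  obtains C where "0 \<le> C"
    "\<And>f. memLp \<Omega> (ereal p) f \<Longrightarrow> Lpnorm \<Omega> (ereal p) (abs_bergman_proj \<Omega> K f) \<le> C * Lpnorm \<Omega> (ereal p) f"
proof -
  obtain C where C: "\<And>f. memLp \<Omega> (ereal p) f \<Longrightarrow>
      Lpnorm \<Omega> (ereal p) (abs_bergman_proj \<Omega> K f) \<le> C * Lpnorm \<Omega> (ereal p) f"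
    using assms unfolding abs_proj_bounded_def by blast
  have "C * Lpnorm \<Omega> (ereal p) f \<le> max C 0 * Lpnorm \<Omega> (ereal p) f" for f
    by (intro mult_right_mono Lpnorm_real_nonneg) simp
  then show ?thesis using that[of "max C 0"] C by (meson max.cobounded2 order.trans)
qed

lemma memLp_norm_powr:
  assumes "memLp \<Omega> (ereal (r * p)) f" "0 < r" "0 < p"
  shows "memLp \<Omega> (ereal p) (\<lambda>x. of_real (norm (f x) powr r))"
    and "Lpnorm \<Omega> (ereal p) (\<lambda>x. of_real (norm (f x) powr r)) = Lpnorm \<Omega> (ereal (r * p)) f powr r"
  using assms by (auto simp: memLp_real_iff Lpnorm_real powr_powr mult.commute)

lemma memLp_Lpnorm_le_of_powr_le:
  assumes g: "g \<in> borel_measurable (lebesgue_on \<Omega>)" and h: "memLp \<Omega> (ereal p) h"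
    and le: "AE x in lebesgue_on \<Omega>. norm (g x) powr r \<le> A * norm (h x)"
    and "0 \<le> A" "0 < r" "0 < p"
  shows "memLp \<Omega> (ereal (r * p)) g"
    and "Lpnorm \<Omega> (ereal (r * p)) g \<le> (A * Lpnorm \<Omega> (ereal p) h) powr (1 / r)"
proof -
  have h_int: "integrable (lebesgue_on \<Omega>) (\<lambda>x. A powr p * norm (h x) powr p)"
    using h by (simp add: memLp_real_iff)
  have le_p: "AE x in lebesgue_on \<Omega>. norm (g x) powr (r * p) \<le> A powr p * norm (h x) powr p"
    using le
  proof eventually_elim
    case (elim x)
    then have "(norm (g x) powr r) powr p \<le> (A * norm (h x)) powr p"
      using \<open>0 < p\<close> by (intro powr_mono2) auto
    then show "norm (g x) powr (r * p) \<le> A powr p * norm (h x) powr p"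
      using \<open>0 \<le> A\<close> by (simp add: powr_powr powr_mult)
  qed
  have g_int: "integrable (lebesgue_on \<Omega>) (\<lambda>x. norm (g x) powr (r * p))"
    by (rule Bochner_Integration.integrable_bound[OF h_int]) (use g le_p in \<open>auto elim: AE_mp\<close>)
  then show "memLp \<Omega> (ereal (r * p)) g"
    using g by (simp add: memLp_real_iff)
  define J where "J = (\<integral>x. norm (h x) powr p \<partial>lebesgue_on \<Omega>)"
  have "0 \<le> J" unfolding J_def by simp
  have "(\<integral>x. norm (g x) powr (r * p) \<partial>lebesgue_on \<Omega>) \<le> A powr p * J"
    unfolding J_def using integral_mono_AE[OF g_int h_int le_p] by simp
  then have "Lpnorm \<Omega> (ereal (r * p)) g \<le> (A powr p * J) powr (1 / (r * p))"
    unfolding Lpnorm_real using assms(5,6) by (intro powr_mono2) auto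
  also have "\<dots> = (A * J powr (1 / p)) powr (1 / r)"
    using \<open>0 \<le> A\<close> \<open>0 \<le> J\<close> assms(5,6) by (simp add: powr_mult powr_powr mult.commute)
  finally show "Lpnorm \<Omega> (ereal (r * p)) g \<le> (A * Lpnorm \<Omega> (ereal p) h) powr (1 / r)"
    by (simp add: Lpnorm_real J_def)
qed

lemma Lp_opnorm_le_mult:
  assumes "0 \<le> c"
    and T_bounded: "\<exists>D\<ge>0. \<forall>f. memLp \<Omega> p f \<longrightarrow> Lpnorm \<Omega> p (T f) \<le> D * Lpnorm \<Omega> p f"
    and S_le: "\<And>D f. 0 \<le> D \<Longrightarrow> (\<forall>f. memLp \<Omega> p f \<longrightarrow> Lpnorm \<Omega> p (T f) \<le> D * Lpnorm \<Omega> p f) \<Longrightarrow>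
        memLp \<Omega> p f \<Longrightarrow> Lpnorm \<Omega> p (S f) \<le> c * D * Lpnorm \<Omega> p f"
  shows "Lp_opnorm \<Omega> p S \<le> c * Lp_opnorm \<Omega> p T"
proof -
  define bounds where "bounds U = {C. C \<ge> 0 \<and> (\<forall>f. memLp \<Omega> p f \<longrightarrow> Lpnorm \<Omega> p (U f) \<le> C * Lpnorm \<Omega> p f)}"
    for U
  have "bounds T \<noteq> {}" using T_bounded unfolding bounds_def by blast
  have S_bound: "c * D \<in> bounds S" if "D \<in> bounds T" for D
    using that S_le \<open>0 \<le> c\<close> unfolding bounds_def by auto
  have "Inf (bounds S) \<le> c * Inf (bounds T)"
  proof (cases "c = 0")
    case True
    then show ?thesis
      using S_bound \<open>bounds T \<noteq> {}\<close> by (auto intro!: cInf_lower bdd_belowI[of _ 0] simp: bounds_def)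
  next
    case False
    have "Inf (bounds S) / c \<le> Inf (bounds T)"
    proof (rule cInf_greatest[OF \<open>bounds T \<noteq> {}\<close>])
      fix D assume "D \<in> bounds T"
      then have "Inf (bounds S) \<le> c * D"
        by (intro cInf_lower S_bound) (auto simp: bounds_def intro: bdd_belowI[of _ 0])
      then show "Inf (bounds S) / c \<le> D" using False \<open>0 \<le> c\<close> by (simp add: divide_le_eq mult.commute)
    qed
    then show ?thesis using False \<open>0 \<le> c\<close> by (simp add: divide_le_eq mult.commute)
  qed
  then show ?thesis unfolding Lp_opnorm_def bounds_def .
qed

locale BR_domain =
  fixes \<Omega> :: "(complex ^ 'n) set" and K :: "complex ^ 'n \<Rightarrow> complex ^ 'n \<Rightarrow> complex"
  assumes open_domain: "open \<Omega>" and domain_nonempty: "\<Omega> \<noteq> {}"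
    and bergman_kernel: "is_bergman_kernel \<Omega> K" and BR: "property_BR \<Omega> K"
begin

abbreviation dV :: "(complex ^ 'n) measure" where "dV \<equiv> lebesgue_on \<Omega>"

lemma domain_in_sets_lebesgue: "\<Omega> \<in> sets lebesgue"
  using open_domain by (metis borel_open sets_completionI_sets sets_lborel)

lemma kernel_in_bergman_space: "z \<in> \<Omega> \<Longrightarrow> (\<lambda>w. K w z) \<in> bergman_space \<Omega>"
  using bergman_kernel unfolding is_bergman_kernel_def by blast

lemma kernel_reproducing: "z \<in> \<Omega> \<Longrightarrow> f \<in> bergman_space \<Omega> \<Longrightarrow> f z = (\<integral>w. f w * cnj (K w z) \<partial>dV)"
  using bergman_kernel unfolding is_bergman_kernel_def by blast

lemma continuous_on_kernel_fst:
  assumes "z \<in> \<Omega>"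
  shows "continuous_on \<Omega> (\<lambda>w. K w z)"
proof (rule continuous_at_imp_continuous_on, rule ballI)
  fix w assume "w \<in> \<Omega>"
  then obtain L where "((\<lambda>w. K w z) has_derivative L) (at w)"
    using kernel_in_bergman_space[OF assms] unfolding bergman_space_def holo_Cn_def by blast
  then show "isCont (\<lambda>w. K w z) w" by (rule has_derivative_continuous)
qed

lemma kernel_cnj_swap:
  assumes "z \<in> \<Omega>" "w \<in> \<Omega>"
  shows "K z w = cnj (K w z)"
proof -
  have "K z w = (\<integral>v. K v w * cnj (K v z) \<partial>dV)"
    using kernel_reproducing[OF assms(1) kernel_in_bergman_space[OF assms(2)]] .
  also have "\<dots> = cnj (\<integral>v. K v z * cnj (K v w) \<partial>dV)"
    by (simp add: mult.commute flip: Bochner_Integration.integral_cnj)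
  also have "\<dots> = cnj (K w z)"
    using kernel_reproducing[OF assms(2) kernel_in_bergman_space[OF assms(1)]] by simp
  finally show ?thesis .
qed

lemma continuous_on_kernel_snd:
  assumes "w \<in> \<Omega>"
  shows "continuous_on \<Omega> (\<lambda>z. K w z)"
proof -
  have "continuous_on \<Omega> (\<lambda>z. cnj (K z w))"
    by (intro continuous_on_cnj continuous_on_kernel_fst assms)
  then show ?thesis
    by (rule continuous_on_cong[THEN iffD1, rotated 2]) (auto simp: kernel_cnj_swap[OF assms])
qed

lemma measurable_kernel_fst: "z \<in> \<Omega> \<Longrightarrow> (\<lambda>w. K w z) \<in> borel_measurable dV"
  by (rule continuous_imp_measurable_on_sets_lebesgue[OF continuous_on_kernel_fst domain_in_sets_lebesgue])

lemma measurable_kernel_snd: "w \<in> \<Omega> \<Longrightarrow> (\<lambda>z. K w z) \<in> borel_measurable dV"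
  by (rule continuous_imp_measurable_on_sets_lebesgue[OF continuous_on_kernel_snd domain_in_sets_lebesgue])

lemma measurable_id_dV: "(\<lambda>x. x) \<in> borel_measurable dV"
  by (rule continuous_imp_measurable_on_sets_lebesgue[OF continuous_on_id domain_in_sets_lebesgue])

lemma measurable_kernel_pair: "(\<lambda>(z, w). K w z) \<in> borel_measurable (dV \<Otimes>\<^sub>M dV)"
  unfolding case_prod_beta
proof (rule borel_measurable_Caratheodory[where G="\<lambda>x p. K x (fst p)", OF open_domain domain_nonempty])
  show "snd \<in> borel_measurable (dV \<Otimes>\<^sub>M dV)"
    using measurable_compose[OF measurable_snd[of dV dV] measurable_id_dV] by simp
  show "(\<lambda>p. K x (fst p)) \<in> borel_measurable (dV \<Otimes>\<^sub>M dV)" if "x \<in> \<Omega>" for x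
    using measurable_compose[OF measurable_fst[of dV dV] measurable_kernel_snd[OF that]] by simp
qed (auto simp: space_pair_measure intro: continuous_on_kernel_fst)

lemma measurable_kernel_diag: "(\<lambda>z. K z z) \<in> borel_measurable dV"
  by (rule borel_measurable_Caratheodory[where G="\<lambda>x z. K x z", OF open_domain domain_nonempty measurable_id_dV])
     (auto intro: measurable_kernel_snd continuous_on_kernel_fst)

lemma integrable_norm_kernel_sq: "z \<in> \<Omega> \<Longrightarrow> integrable dV (\<lambda>w. (cmod (K w z))\<^sup>2)"
  using kernel_in_bergman_space unfolding bergman_space_def memLp_def by simp

lemma kernel_diag:
  assumes "z \<in> \<Omega>"
  shows "K z z = of_real (\<integral>w. (cmod (K w z))\<^sup>2 \<partial>dV)"
proof -
  have "K z z = (\<integral>w. K w z * cnj (K w z) \<partial>dV)"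
    using kernel_reproducing[OF assms kernel_in_bergman_space[OF assms]] .
  also have "\<dots> = (\<integral>w. of_real ((cmod (K w z))\<^sup>2) \<partial>dV)"
    by (simp only: complex_norm_square)
  finally show ?thesis by (simp only: integral_complex_of_real)
qed

lemma Re_kernel_diag: "z \<in> \<Omega> \<Longrightarrow> Re (K z z) = (\<integral>w. (cmod (K w z))\<^sup>2 \<partial>dV)"
  using kernel_diag by simp

lemma Re_kernel_diag_pos:
  assumes "z \<in> \<Omega>"
  shows "0 < Re (K z z)"
proof -
  have "0 \<le> Re (K z z)" unfolding Re_kernel_diag[OF assms] by simp
  moreover have "K z z \<noteq> 0" using BR assms unfolding property_BR_def by blast
  then have "Re (K z z) \<noteq> 0"
    using kernel_diag[OF assms] Re_kernel_diag[OF assms] by (metis of_real_0)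
  ultimately show ?thesis by simp
qed

lemma norm_kernel_div_le_BR_const:
  "z \<in> \<Omega> \<Longrightarrow> w \<in> \<Omega> \<Longrightarrow> cmod (K w z) / Re (K z z) \<le> BR_const \<Omega> K"
  unfolding BR_const_def using BR unfolding property_BR_def by (intro cSup_upper) auto

lemma norm_kernel_le_BR_const:
  "z \<in> \<Omega> \<Longrightarrow> w \<in> \<Omega> \<Longrightarrow> cmod (K w z) \<le> BR_const \<Omega> K * Re (K z z)"
  using norm_kernel_div_le_BR_const Re_kernel_diag_pos by (simp add: divide_le_eq)

lemma BR_const_pos: "0 < BR_const \<Omega> K"
proof -
  obtain z where z: "z \<in> \<Omega>" using domain_nonempty by auto
  have "K z z \<noteq> 0" using BR z unfolding property_BR_def by blast
  then have "0 < cmod (K z z) / Re (K z z)" using Re_kernel_diag_pos[OF z] by simp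
  then show ?thesis using norm_kernel_div_le_BR_const[OF z z] by simp
qed

definition berezin_density :: "complex ^ 'n \<Rightarrow> complex ^ 'n \<Rightarrow> real" where
  "berezin_density z w = (cmod (K w z))\<^sup>2 / Re (K z z)"

lemma berezin_density_nonneg: "z \<in> \<Omega> \<Longrightarrow> 0 \<le> berezin_density z w"
  unfolding berezin_density_def by (auto intro: divide_nonneg_pos Re_kernel_diag_pos)

lemma berezin_density_eq: "berezin_density z w = cmod (K w z) * (cmod (K w z) / Re (K z z))"
  unfolding berezin_density_def by (simp add: power2_eq_square)

lemma berezin_density_le_norm_kernel:
  assumes "z \<in> \<Omega>" "w \<in> \<Omega>"
  shows "berezin_density z w \<le> BR_const \<Omega> K * cmod (K z w)"
proof -
  have "berezin_density z w \<le> cmod (K w z) * BR_const \<Omega> K"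
    unfolding berezin_density_eq by (rule mult_left_mono[OF norm_kernel_div_le_BR_const[OF assms]]) simp
  then show ?thesis using kernel_cnj_swap[OF assms] by (simp add: mult.commute)
qed

lemma berezin_density_bounded:
  assumes "z \<in> \<Omega>" "w \<in> \<Omega>"
  shows "berezin_density z w \<le> BR_const \<Omega> K * (BR_const \<Omega> K * Re (K z z))"
  unfolding berezin_density_eq
  using mult_mono[OF norm_kernel_le_BR_const[OF assms] norm_kernel_div_le_BR_const[OF assms]]
    BR_const_pos Re_kernel_diag_pos[OF assms(1)]
  by (simp add: mult_ac)

lemma measurable_berezin_density: "z \<in> \<Omega> \<Longrightarrow> berezin_density z \<in> borel_measurable dV"
  unfolding berezin_density_def[abs_def] using measurable_kernel_fst by measurable

lemma integrable_berezin_density: "z \<in> \<Omega> \<Longrightarrow> integrable dV (berezin_density z)"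
  unfolding berezin_density_def[abs_def] using integrable_norm_kernel_sq by (intro integrable_divide)

lemma integral_berezin_density: "z \<in> \<Omega> \<Longrightarrow> (\<integral>w. berezin_density z w \<partial>dV) = 1"
  unfolding berezin_density_def using Re_kernel_diag Re_kernel_diag_pos by fastforce

lemma berezin_eq: "berezin \<Omega> K \<phi> z = (\<integral>w. \<phi> w * of_real (berezin_density z w) \<partial>dV)"
  unfolding berezin_def berezin_density_def ..

lemma measurable_berezin:
  assumes \<phi>: "\<phi> \<in> borel_measurable dV"
  shows "berezin \<Omega> K \<phi> \<in> borel_measurable dV"
proof -
  interpret sigma_finite_measure dV by (rule sigma_finite_lebesgue_on[OF domain_in_sets_lebesgue])
  have "(\<lambda>(z, w). \<phi> w * of_real ((cmod (K w z))\<^sup>2 / Re (K z z))) \<in> borel_measurable (dV \<Otimes>\<^sub>M dV)"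
    using measurable_kernel_pair measurable_compose[OF measurable_snd \<phi>]
      measurable_compose[OF measurable_fst measurable_kernel_diag]
    unfolding case_prod_beta by measurable
  from borel_measurable_lebesgue_integral[OF this]
  show ?thesis unfolding berezin_def[abs_def] by simp
qed

lemma integrable_norm_powr_mult_berezin_density:
  assumes z: "z \<in> \<Omega>" and \<phi>: "\<phi> \<in> borel_measurable dV"
    and \<phi>_int: "integrable dV (\<lambda>w. norm (\<phi> w) powr q)" and "0 \<le> r" "r \<le> q"
  shows "integrable dV (\<lambda>w. norm (\<phi> w) powr r * berezin_density z w)"
proof (rule Bochner_Integration.integrable_bound)
  define M where "M = BR_const \<Omega> K * (BR_const \<Omega> K * Re (K z z))"
  show "integrable dV (\<lambda>w. M * norm (\<phi> w) powr q + berezin_density z w)"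
    using \<phi>_int integrable_berezin_density[OF z] by simp
  show "(\<lambda>w. norm (\<phi> w) powr r * berezin_density z w) \<in> borel_measurable dV"
    using \<phi> measurable_berezin_density[OF z] by measurable
  show "AE w in dV. norm (norm (\<phi> w) powr r * berezin_density z w)
      \<le> norm (M * norm (\<phi> w) powr q + berezin_density z w)"
  proof (rule AE_I2)
    fix w assume "w \<in> space dV"
    then have w: "w \<in> \<Omega>" by simp
    have k: "0 \<le> berezin_density z w" by (rule berezin_density_nonneg[OF z])
    have "0 \<le> M" unfolding M_def using BR_const_pos Re_kernel_diag_pos[OF z] by simp
    have "norm (\<phi> w) powr r * berezin_density z w \<le> (norm (\<phi> w) powr q + 1) * berezin_density z w"
      by (rule mult_right_mono[OF powr_le_powr_plus_one k]) (use assms in auto)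
    also have "\<dots> \<le> norm (\<phi> w) powr q * M + berezin_density z w"
      using berezin_density_bounded[OF z w] unfolding M_def by (simp add: distrib_right mult_left_mono)
    finally show "norm (norm (\<phi> w) powr r * berezin_density z w)
        \<le> norm (M * norm (\<phi> w) powr q + berezin_density z w)"
      using k \<open>0 \<le> M\<close> by (simp add: mult.commute)
  qed
qed

lemma integrable_berezin_integrand:
  assumes \<phi>: "memLp \<Omega> p \<phi>" and "1 \<le> p" and z: "z \<in> \<Omega>"
  shows "integrable dV (\<lambda>w. \<phi> w * of_real (berezin_density z w))"
proof -
  have \<phi>_meas: "\<phi> \<in> borel_measurable dV" using \<phi> unfolding memLp_def by simp
  have meas: "(\<lambda>w. \<phi> w * of_real (berezin_density z w)) \<in> borel_measurable dV"
    using \<phi>_meas measurable_berezin_density[OF z] by measurable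
  have norm_eq: "norm (\<phi> w * of_real (berezin_density z w)) = norm (\<phi> w) * berezin_density z w" for w
    using berezin_density_nonneg[OF z] by (simp add: norm_mult)
  show ?thesis
  proof (cases p)
    case (real q)
    then have "integrable dV (\<lambda>w. norm (\<phi> w) powr 1 * berezin_density z w)"
      using integrable_norm_powr_mult_berezin_density[OF z \<phi>_meas, of q 1] \<phi> \<open>1 \<le> p\<close>
      by (simp add: memLp_def)
    then show ?thesis
      by (rule Bochner_Integration.integrable_bound[OF _ meas]) (simp add: norm_eq)
  next
    case PInf
    then obtain C where "AE w in dV. norm (\<phi> w) \<le> C" using \<phi> unfolding memLp_def by auto
    then have "AE w in dV. norm (\<phi> w * of_real (berezin_density z w)) \<le> norm (C * berezin_density z w)"
      by eventually_elim
        (auto simp: norm_eq abs_mult berezin_density_nonneg[OF z] intro: mult_right_mono)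
    then show ?thesis
      by (rule Bochner_Integration.integrable_bound[OF integrable_mult_right[OF integrable_berezin_density[OF z]] meas])
  qed (use \<open>1 \<le> p\<close> in simp)
qed

lemma norm_berezin_powr_le_abs_bergman_proj:
  assumes z: "z \<in> \<Omega>" and \<phi>: "\<phi> \<in> borel_measurable dV"
    and \<phi>_int: "integrable dV (\<lambda>w. norm (\<phi> w) powr q)" and r: "1 \<le> r" "r \<le> q"
    and P_int: "integrable dV (\<lambda>w. complex_of_real (cmod (K z w)) * of_real (norm (\<phi> w) powr r))"
  shows "norm (berezin \<Omega> K \<phi> z) powr r
     \<le> BR_const \<Omega> K * norm (abs_bergman_proj \<Omega> K (\<lambda>w. of_real (norm (\<phi> w) powr r)) z)"
proof -
  have P_int': "integrable dV (\<lambda>w. cmod (K z w) * norm (\<phi> w) powr r)"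
    using P_int by (simp add: complex_of_real_integrable_eq flip: of_real_mult)
  have P_eq: "norm (abs_bergman_proj \<Omega> K (\<lambda>w. of_real (norm (\<phi> w) powr r)) z)
      = (\<integral>w. cmod (K z w) * norm (\<phi> w) powr r \<partial>dV)"
    unfolding abs_bergman_proj_def by (simp flip: of_real_mult)
  have int_1: "integrable dV (\<lambda>w. norm (\<phi> w) * berezin_density z w)"
    using integrable_norm_powr_mult_berezin_density[OF z \<phi> \<phi>_int, of 1] r by simp
  have int_r: "integrable dV (\<lambda>w. norm (\<phi> w) powr r * berezin_density z w)"
    using integrable_norm_powr_mult_berezin_density[OF z \<phi> \<phi>_int, of r] r by simp
  have "norm (berezin \<Omega> K \<phi> z) \<le> (\<integral>w. norm (\<phi> w * of_real (berezin_density z w)) \<partial>dV)"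
    unfolding berezin_eq by (rule integral_norm_bound)
  also have "\<dots> = (\<integral>w. norm (\<phi> w) * berezin_density z w \<partial>dV)"
    using berezin_density_nonneg[OF z] by (simp add: norm_mult)
  finally have "norm (berezin \<Omega> K \<phi> z) powr r \<le> (\<integral>w. norm (\<phi> w) * berezin_density z w \<partial>dV) powr r"
    using r by (intro powr_mono2) auto
  also have "\<dots> \<le> (\<integral>w. norm (\<phi> w) powr r * berezin_density z w \<partial>dV)"
    by (rule powr_integral_le_integral_powr[OF r(1) _ _ integrable_berezin_density[OF z]
          integral_berezin_density[OF z] int_1 int_r])
       (use berezin_density_nonneg[OF z] in auto)
  also have "\<dots> \<le> (\<integral>w. BR_const \<Omega> K * (cmod (K z w) * norm (\<phi> w) powr r) \<partial>dV)"
  proof (rule integral_mono[OF int_r])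
    show "integrable dV (\<lambda>w. BR_const \<Omega> K * (cmod (K z w) * norm (\<phi> w) powr r))"
      using P_int' by simp
    fix w assume "w \<in> space dV"
    then show "norm (\<phi> w) powr r * berezin_density z w \<le> BR_const \<Omega> K * (cmod (K z w) * norm (\<phi> w) powr r)"
      using mult_left_mono[OF berezin_density_le_norm_kernel[OF z], of w "norm (\<phi> w) powr r"]
      by (simp add: mult_ac)
  qed
  finally show ?thesis unfolding P_eq by simp
qed

lemma berezin_Lp_bound:
  assumes "1 \<le> p0" and P_bounded: "abs_proj_bounded \<Omega> K (ereal p0)"
    and D: "0 \<le> D" "\<And>f. memLp \<Omega> (ereal p0) f \<Longrightarrow>
         Lpnorm \<Omega> (ereal p0) (abs_bergman_proj \<Omega> K f) \<le> D * Lpnorm \<Omega> (ereal p0) f"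
    and "1 \<le> r" and \<phi>: "memLp \<Omega> (ereal (r * p0)) \<phi>"
  shows "memLp \<Omega> (ereal (r * p0)) (berezin \<Omega> K \<phi>)"
    and "Lpnorm \<Omega> (ereal (r * p0)) (berezin \<Omega> K \<phi>)
       \<le> (BR_const \<Omega> K * D) powr (1 / r) * Lpnorm \<Omega> (ereal (r * p0)) \<phi>"
proof -
  define \<psi> where "\<psi> = (\<lambda>w. complex_of_real (norm (\<phi> w) powr r))"
  define P where "P = abs_bergman_proj \<Omega> K \<psi>"
  have "0 < r" "0 < p0" using assms by auto
  have \<psi>: "memLp \<Omega> (ereal p0) \<psi>" "Lpnorm \<Omega> (ereal p0) \<psi> = Lpnorm \<Omega> (ereal (r * p0)) \<phi> powr r"
    unfolding \<psi>_def using memLp_norm_powr[OF \<phi> \<open>0 < r\<close> \<open>0 < p0\<close>] by auto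
  have \<phi>_meas: "\<phi> \<in> borel_measurable dV" and \<phi>_int: "integrable dV (\<lambda>w. norm (\<phi> w) powr (r * p0))"
    using \<phi> by (auto simp: memLp_real_iff)
  have "r \<le> r * p0" using \<open>1 \<le> p0\<close> \<open>0 < r\<close> by simp
  obtain "AE z in dV. integrable dV (\<lambda>w. of_real (cmod (K z w)) * \<psi> w)" and "memLp \<Omega> (ereal p0) P"
    using P_bounded \<psi>(1) unfolding abs_proj_bounded_def P_def by blast
  moreover have "AE z in dV. norm (berezin \<Omega> K \<phi> z) powr r \<le> BR_const \<Omega> K * norm (P z)"
    using calculation(1) AE_space
    by eventually_elim
       (auto simp: P_def \<psi>_def intro!: norm_berezin_powr_le_abs_bergman_proj[OF _ \<phi>_meas \<phi>_int \<open>1 \<le> r\<close> \<open>r \<le> r * p0\<close>])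
  ultimately have B: "memLp \<Omega> (ereal (r * p0)) (berezin \<Omega> K \<phi>)"
      "Lpnorm \<Omega> (ereal (r * p0)) (berezin \<Omega> K \<phi>) \<le> (BR_const \<Omega> K * Lpnorm \<Omega> (ereal p0) P) powr (1 / r)"
    using memLp_Lpnorm_le_of_powr_le[OF measurable_berezin[OF \<phi>_meas]] BR_const_pos \<open>0 < r\<close> \<open>0 < p0\<close>
    by auto
  then show "memLp \<Omega> (ereal (r * p0)) (berezin \<Omega> K \<phi>)" by simp
  have "Lpnorm \<Omega> (ereal p0) P \<le> D * Lpnorm \<Omega> (ereal (r * p0)) \<phi> powr r"
    using D(2)[OF \<psi>(1)] unfolding P_def \<psi>(2) .
  then have "BR_const \<Omega> K * Lpnorm \<Omega> (ereal p0) P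
      \<le> BR_const \<Omega> K * D * Lpnorm \<Omega> (ereal (r * p0)) \<phi> powr r"
    using BR_const_pos by (simp add: mult.assoc)
  then have "Lpnorm \<Omega> (ereal (r * p0)) (berezin \<Omega> K \<phi>)
      \<le> (BR_const \<Omega> K * D * Lpnorm \<Omega> (ereal (r * p0)) \<phi> powr r) powr (1 / r)"
    using B(2) BR_const_pos \<open>0 < r\<close> Lpnorm_real_nonneg[of \<Omega> p0 P]
    by (meson order.trans powr_mono2 less_imp_le mult_nonneg_nonneg zero_le_divide_1_iff)
  also have "\<dots> = (BR_const \<Omega> K * D) powr (1 / r) * Lpnorm \<Omega> (ereal (r * p0)) \<phi>"
    using BR_const_pos D(1) \<open>0 < r\<close> Lpnorm_real_nonneg[of \<Omega> "r * p0" \<phi>]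
    by (simp add: powr_mult powr_powr)
  finally show "Lpnorm \<Omega> (ereal (r * p0)) (berezin \<Omega> K \<phi>)
       \<le> (BR_const \<Omega> K * D) powr (1 / r) * Lpnorm \<Omega> (ereal (r * p0)) \<phi>" .
qed

lemma berezin_Linf_bound:
  assumes \<phi>: "memLp \<Omega> \<infinity> \<phi>"
  shows "memLp \<Omega> \<infinity> (berezin \<Omega> K \<phi>)" and "Lpnorm \<Omega> \<infinity> (berezin \<Omega> K \<phi>) \<le> Lpnorm \<Omega> \<infinity> \<phi>"
proof -
  have \<phi>_meas: "\<phi> \<in> borel_measurable dV" using \<phi> unfolding memLp_def by simp
  have bound: "norm (berezin \<Omega> K \<phi> z) \<le> C" if C: "AE w in dV. norm (\<phi> w) \<le> C" and z: "z \<in> \<Omega>" for C z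
  proof -
    have "norm (berezin \<Omega> K \<phi> z) \<le> (\<integral>w. norm (\<phi> w * of_real (berezin_density z w)) \<partial>dV)"
      unfolding berezin_eq by (rule integral_norm_bound)
    also have "\<dots> \<le> (\<integral>w. C * berezin_density z w \<partial>dV)"
    proof (rule integral_mono_AE)
      show "integrable dV (\<lambda>w. norm (\<phi> w * of_real (berezin_density z w)))"
        using integrable_berezin_integrand[OF \<phi> _ z] by simp
      show "integrable dV (\<lambda>w. C * berezin_density z w)"
        using integrable_berezin_density[OF z] by simp
      show "AE w in dV. norm (\<phi> w * of_real (berezin_density z w)) \<le> C * berezin_density z w"
        using C by eventually_elim (simp add: norm_mult berezin_density_nonneg[OF z] mult_right_mono)
    qed
    also have "\<dots> = C" using integral_berezin_density[OF z] by simp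
    finally show ?thesis .
  qed
  have bound_AE: "AE z in dV. norm (berezin \<Omega> K \<phi> z) \<le> C" if "AE w in dV. norm (\<phi> w) \<le> C" for C
    by (rule AE_I2) (simp add: bound[OF that])
  obtain C where C: "AE w in dV. norm (\<phi> w) \<le> C" using \<phi> unfolding memLp_def by auto
  then show "memLp \<Omega> \<infinity> (berezin \<Omega> K \<phi>)"
    unfolding memLp_def using measurable_berezin[OF \<phi>_meas] bound_AE by auto
  have "max C 0 \<in> {C. C \<ge> 0 \<and> (AE w in dV. norm (\<phi> w) \<le> C)}"
    using C by (auto elim: AE_mp)
  then have "Inf {C. C \<ge> 0 \<and> (AE z in dV. norm (berezin \<Omega> K \<phi> z) \<le> C)}
      \<le> Inf {C. C \<ge> 0 \<and> (AE w in dV. norm (\<phi> w) \<le> C)}"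
    using bound_AE by (intro cInf_superset_mono bdd_belowI[of _ 0]) blast+
  then show "Lpnorm \<Omega> \<infinity> (berezin \<Omega> K \<phi>) \<le> Lpnorm \<Omega> \<infinity> \<phi>"
    unfolding Lpnorm_def by simp
qed

lemma berezin_bounded_Lp:
  assumes "1 \<le> p0" and P_bounded: "abs_proj_bounded \<Omega> K (ereal p0)" and "ereal p0 \<le> p"
  shows "\<exists>C. \<forall>\<phi>. memLp \<Omega> p \<phi> \<longrightarrow>
           (\<forall>z\<in>\<Omega>. integrable dV (\<lambda>w. \<phi> w * of_real (berezin_density z w))) \<and>
           memLp \<Omega> p (berezin \<Omega> K \<phi>) \<and> Lpnorm \<Omega> p (berezin \<Omega> K \<phi>) \<le> C * Lpnorm \<Omega> p \<phi>"
proof -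
  have "1 \<le> p" using assms by (simp add: order_trans[OF _ \<open>ereal p0 \<le> p\<close>])
  obtain C where "\<And>\<phi>. memLp \<Omega> p \<phi> \<Longrightarrow>
      memLp \<Omega> p (berezin \<Omega> K \<phi>) \<and> Lpnorm \<Omega> p (berezin \<Omega> K \<phi>) \<le> C * Lpnorm \<Omega> p \<phi>"
  proof (cases p)
    case (real q)
    obtain D where D: "0 \<le> D" "\<And>f. memLp \<Omega> (ereal p0) f \<Longrightarrow>
        Lpnorm \<Omega> (ereal p0) (abs_bergman_proj \<Omega> K f) \<le> D * Lpnorm \<Omega> (ereal p0) f"
      using abs_proj_bounded_nonneg_const[OF P_bounded] by blast
    define r where "r = q / p0"
    have "1 \<le> r" "p = ereal (r * p0)"
      using assms real by (auto simp: r_def)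
    then show ?thesis
      using that[of "(BR_const \<Omega> K * D) powr (1 / r)"] berezin_Lp_bound[OF \<open>1 \<le> p0\<close> P_bounded D \<open>1 \<le> r\<close>]
      by simp
  next
    case PInf
    then show ?thesis
      using that[of 1] berezin_Linf_bound by simp
  qed (use \<open>1 \<le> p\<close> in simp)
  then show ?thesis
    using integrable_berezin_integrand[OF _ \<open>1 \<le> p\<close>] by blast
qed

lemma berezin_Lp_opnorm_le:
  assumes "1 \<le> p0" and "abs_proj_bounded \<Omega> K (ereal p0)"
  shows "Lp_opnorm \<Omega> (ereal p0) (berezin \<Omega> K)
    \<le> BR_const \<Omega> K * Lp_opnorm \<Omega> (ereal p0) (abs_bergman_proj \<Omega> K)"
proof (rule Lp_opnorm_le_mult)
  show "\<exists>D\<ge>0. \<forall>f. memLp \<Omega> (ereal p0) f \<longrightarrow>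
      Lpnorm \<Omega> (ereal p0) (abs_bergman_proj \<Omega> K f) \<le> D * Lpnorm \<Omega> (ereal p0) f"
    using abs_proj_bounded_nonneg_const[OF assms(2)] by metis
  fix D f
  assume "0 \<le> D" "\<forall>f. memLp \<Omega> (ereal p0) f \<longrightarrow>
      Lpnorm \<Omega> (ereal p0) (abs_bergman_proj \<Omega> K f) \<le> D * Lpnorm \<Omega> (ereal p0) f"
    and "memLp \<Omega> (ereal p0) f"
  then show "Lpnorm \<Omega> (ereal p0) (berezin \<Omega> K f) \<le> BR_const \<Omega> K * D * Lpnorm \<Omega> (ereal p0) f"
    using berezin_Lp_bound(2)[OF assms, of D 1 f] BR_const_pos by simp
qed (use BR_const_pos in simp)

end

theorem proposition1:
  fixes \<Omega> :: "(complex ^ 'n) set"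
    and K :: "complex ^ 'n \<Rightarrow> complex ^ 'n \<Rightarrow> complex"
    and p0 :: real
  assumes "domain_Cn \<Omega>"
    and "is_bergman_kernel \<Omega> K"
    and "property_BR \<Omega> K"
    and "1 < p0"
    and "abs_proj_bounded \<Omega> K (ereal p0)"
  shows "(\<forall>p::ereal. ereal p0 \<le> p \<longrightarrow>
           (\<exists>C. \<forall>\<phi>. memLp \<Omega> p \<phi> \<longrightarrow>
              (\<forall>z\<in>\<Omega>. integrable (lebesgue_on \<Omega>)
                   (\<lambda>w. \<phi> w * of_real ((cmod (K w z))\<^sup>2 / Re (K z z)))) \<and>
              memLp \<Omega> p (berezin \<Omega> K \<phi>) \<and>
              Lpnorm \<Omega> p (berezin \<Omega> K \<phi>) \<le> C * Lpnorm \<Omega> p \<phi>))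
       \<and> Lp_opnorm \<Omega> (ereal p0) (berezin \<Omega> K)
           \<le> BR_const \<Omega> K * Lp_opnorm \<Omega> (ereal p0) (abs_bergman_proj \<Omega> K)"
proof -
  interpret BR_domain \<Omega> K
    using assms(1-3) by unfold_locales (auto simp: domain_Cn_def)
  have "1 \<le> p0" using assms(4) by simp
  show ?thesis
    using berezin_bounded_Lp[OF \<open>1 \<le> p0\<close> assms(5)] berezin_Lp_opnorm_le[OF \<open>1 \<le> p0\<close> assms(5)]
    unfolding berezin_density_def by blast
qed

end
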